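(* Let $G$ be an abelian group, $S$ a multiset of elements of $G$, and $\Gamma=\Phi(G,S)$. For any two distinct members $s,t$ of $S$, all the connected components of the induced subgraph $\Gamma[V_s\cup V_t]$ are isomorphic to one another, and each is complete bipartite (every vertex of the component lying in $V_s$ is adjacent to every vertex of the component lying in $V_t$).
   Context: For a group $G$ and a multiset $S$ of elements of $G$, $\Phi(G,S)$ is the multigraph (parallel edges allowed) whose vertex set is the union over the members $s$ of $S$ (with multiplicity, a repeated element giving a separate copy of its cosets per occurrence) of the levels $V_s=\{\langle s\rangle x: x\in G\}$ (right cosets), with, for $\langle s\rangle x\in V_s$, $\langle t\rangle y\in V_t$, $s,t$ distinct members of $S$, one edge labeled $g$ between them for each $g\in\langle s\rangle x\cap\langle t\rangle y$, and no other edges. The induced subgraph $\Gamma[X]$ has vertex set $X$ and all edges of $\Gamma$ with both end-points in $X$. *)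

theory Defs
  imports "HOL-Algebra.Algebra"
begin

text \<open>Generic multigraphs with parallel edges: a vertex set V, an edge set E and an
endpoint map ep assigning to each edge its (two-element) set of end-points.\<close>

definition mg_adj :: "'e set \<Rightarrow> ('e \<Rightarrow> 'v set) \<Rightarrow> 'v \<Rightarrow> 'v \<Rightarrow> bool" where
  "mg_adj E ep v w \<longleftrightarrow> (\<exists>e\<in>E. ep e = {v, w})"

definition induced_edges :: "'e set \<Rightarrow> ('e \<Rightarrow> 'v set) \<Rightarrow> 'v set \<Rightarrow> 'e set" where
  "induced_edges E ep W = {ed. ed \<in> E \<and> ep ed \<subseteq> W}"

definition mg_component :: "'v set \<Rightarrow> 'e set \<Rightarrow> ('e \<Rightarrow> 'v set) \<Rightarrow> 'v \<Rightarrow> 'v set" where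
  "mg_component V E ep v =
     {w \<in> V. (v, w) \<in> {(x, y). x \<in> V \<and> y \<in> V \<and> mg_adj E ep x y}\<^sup>*}"

definition mg_components :: "'v set \<Rightarrow> 'e set \<Rightarrow> ('e \<Rightarrow> 'v set) \<Rightarrow> 'v set set" where
  "mg_components V E ep = mg_component V E ep ` V"

definition mg_iso :: "'v set \<Rightarrow> 'e set \<Rightarrow> ('e \<Rightarrow> 'v set) \<Rightarrow>
                      'w set \<Rightarrow> 'f set \<Rightarrow> ('f \<Rightarrow> 'w set) \<Rightarrow> bool" where
  "mg_iso V E ep V' E' ep' \<longleftrightarrow>
     (\<exists>f h. bij_betw f V V' \<and> bij_betw h E E' \<and> (\<forall>e\<in>E. ep' (h e) = f ` ep e))"

text \<open>The multiset S is given as a finite index set I together with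
s : I -> carrier G (member i of S is s i; repeated elements are distinct indices).
An edge is a pair (end-point set, label g).\<close>

definition Phi_level :: "('a, 'b) monoid_scheme \<Rightarrow> ('i \<Rightarrow> 'a) \<Rightarrow> 'i \<Rightarrow> ('i \<times> 'a set) set" where
  "Phi_level G s i = {(i, C) | C. C \<in> rcosets\<^bsub>G\<^esub> (generate G {s i})}"

definition Phi_V :: "('a, 'b) monoid_scheme \<Rightarrow> 'i set \<Rightarrow> ('i \<Rightarrow> 'a) \<Rightarrow> ('i \<times> 'a set) set" where
  "Phi_V G I s = (\<Union>i\<in>I. Phi_level G s i)"

definition Phi_E :: "('a, 'b) monoid_scheme \<Rightarrow> 'i set \<Rightarrow> ('i \<Rightarrow> 'a)
                      \<Rightarrow> (('i \<times> 'a set) set \<times> 'a) set" where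
  "Phi_E G I s = {({(i, C), (j, D)}, g) | i C j D g.
      (i, C) \<in> Phi_V G I s \<and> (j, D) \<in> Phi_V G I s \<and> i \<noteq> j \<and> g \<in> C \<inter> D}"

end

theory Submission
  imports Defs
begin

(* Right translation by g maps cosets of <s> to cosets of <s> and an edge label x to x g, so it
   is an automorphism of Phi(G,S); translating a vertex of one component until its coset meets a
   vertex of another component carries the first component onto the second.
   For bipartiteness put H = <s> and K = <t>. As G is abelian, HK is a subgroup, and adjacent
   vertices, being intersecting cosets of H or K, lie in the same coset of HK; so a component lies
   in a single coset HKc. If Hx and Ky belong to it then y = h k x, and k^-1 y = h x is a common
   element of Hx and Ky. *)

lemma mg_adj_commute: "mg_adj E ep v w \<longleftrightarrow> mg_adj E ep w v"
  unfolding mg_adj_def by (simp add: insert_commute)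

definition mg_edge_rel :: "'v set \<Rightarrow> 'e set \<Rightarrow> ('e \<Rightarrow> 'v set) \<Rightarrow> ('v \<times> 'v) set" where
  "mg_edge_rel V E ep = {(x, y). x \<in> V \<and> y \<in> V \<and> mg_adj E ep x y}"

lemma mg_component_altdef: "mg_component V E ep v = {w \<in> V. (v, w) \<in> (mg_edge_rel V E ep)\<^sup>*}"
  unfolding mg_component_def mg_edge_rel_def ..

lemma sym_mg_edge_rel: "sym (mg_edge_rel V E ep)"
  unfolding mg_edge_rel_def sym_def using mg_adj_commute by fast

lemma mg_component_subset: "mg_component V E ep v \<subseteq> V"
  unfolding mg_component_def by blast

lemma mg_component_self: "v \<in> V \<Longrightarrow> v \<in> mg_component V E ep v"
  unfolding mg_component_def by blast

lemma mg_component_eq: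
  assumes "w \<in> mg_component V E ep v"
  shows "mg_component V E ep w = mg_component V E ep v"
proof -
  let ?R = "(mg_edge_rel V E ep)\<^sup>*"
  have vw: "(v, w) \<in> ?R"
    using assms unfolding mg_component_altdef by blast
  have wv: "(w, v) \<in> ?R"
    using symD[OF sym_rtrancl[OF sym_mg_edge_rel] vw] .
  show ?thesis
    unfolding mg_component_altdef using rtrancl_trans[OF vw] rtrancl_trans[OF wv] by blast
qed

lemma mg_component_adj:
  assumes "v \<in> V" "w \<in> V" "mg_adj E ep v w"
  shows "w \<in> mg_component V E ep v"
  using assms unfolding mg_component_altdef mg_edge_rel_def by blast

lemma mg_component_induct [consumes 1, case_names base step]:
  assumes "w \<in> mg_component V E ep v"
    and "P v"
    and "\<And>x y. P x \<Longrightarrow> x \<in> V \<Longrightarrow> y \<in> V \<Longrightarrow> mg_adj E ep x y \<Longrightarrow> P y"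
  shows "P w"
proof -
  have "(v, w) \<in> (mg_edge_rel V E ep)\<^sup>*"
    using assms(1) unfolding mg_component_altdef by blast
  then show ?thesis
    by (induction rule: rtrancl_induct) (use assms(2,3) in \<open>auto simp: mg_edge_rel_def\<close>)
qed

definition mg_endo :: "'v set \<Rightarrow> 'e set \<Rightarrow> ('e \<Rightarrow> 'v set) \<Rightarrow> ('v \<Rightarrow> 'v) \<Rightarrow> ('e \<Rightarrow> 'e) \<Rightarrow> bool" where
  "mg_endo V E ep f h \<longleftrightarrow> f ` V \<subseteq> V \<and> h ` E \<subseteq> E \<and> (\<forall>e\<in>E. ep (h e) = f ` ep e)"

lemma mg_endoD:
  assumes "mg_endo V E ep f h"
  shows "v \<in> V \<Longrightarrow> f v \<in> V" and "e \<in> E \<Longrightarrow> h e \<in> E"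
    and "e \<in> E \<Longrightarrow> ep (h e) = f ` ep e"
  using assms unfolding mg_endo_def by auto

lemma mg_endo_adj:
  assumes "mg_endo V E ep f h" "mg_adj E ep x y"
  shows "mg_adj E ep (f x) (f y)"
proof -
  obtain e where "e \<in> E" "ep e = {x, y}"
    using assms(2) unfolding mg_adj_def by blast
  then have "h e \<in> E" "ep (h e) = {f x, f y}"
    using mg_endoD[OF assms(1)] by auto
  then show ?thesis unfolding mg_adj_def by blast
qed

lemma mg_endo_component:
  assumes "mg_endo V E ep f h" "v \<in> V"
  shows "f ` mg_component V E ep v \<subseteq> mg_component V E ep (f v)"
proof
  fix w' assume "w' \<in> f ` mg_component V E ep v"
  then obtain w where w: "w \<in> mg_component V E ep v" "w' = f w" by blast
  have "f w \<in> mg_component V E ep (f v)"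
    using w(1)
  proof (induction rule: mg_component_induct)
    case base
    show ?case using mg_component_self mg_endoD(1)[OF assms] .
  next
    case (step x y)
    have "f y \<in> mg_component V E ep (f x)"
      using mg_endoD(1)[OF assms(1)] step.hyps mg_endo_adj[OF assms(1)]
      by (intro mg_component_adj) auto
    then show ?case using mg_component_eq[OF step.IH] by simp
  qed
  then show "w' \<in> mg_component V E ep (f v)" using w(2) by simp
qed

lemma mg_endo_induced_edges:
  assumes "mg_endo V E ep f h"
  shows "h ` induced_edges E ep K \<subseteq> induced_edges E ep (f ` K)"
proof
  fix e' assume "e' \<in> h ` induced_edges E ep K"
  then obtain e where e: "e \<in> E" "ep e \<subseteq> K" "e' = h e"
    unfolding induced_edges_def by blast
  have "ep (h e) \<subseteq> f ` K"
    using mg_endoD(3)[OF assms e(1)] image_mono[OF e(2)] by simp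
  then show "e' \<in> induced_edges E ep (f ` K)"
    using mg_endoD(2)[OF assms e(1)] e(3) unfolding induced_edges_def by simp
qed

lemma mg_iso_component_image:
  assumes endo: "mg_endo V E ep f h" and endo': "mg_endo V E ep f' h'"
    and f'f: "\<forall>v\<in>V. f' (f v) = v" and ff': "\<forall>v\<in>V. f (f' v) = v"
    and h'h: "\<forall>e\<in>E. h' (h e) = e" and hh': "\<forall>e\<in>E. h (h' e) = e"
    and v: "v \<in> V"
  shows "mg_iso (mg_component V E ep v) (induced_edges E ep (mg_component V E ep v)) ep
                (mg_component V E ep (f v)) (induced_edges E ep (mg_component V E ep (f v))) ep"
proof -
  let ?K = "mg_component V E ep v" and ?L = "mg_component V E ep (f v)"
  have K: "?K \<subseteq> V" and L: "?L \<subseteq> V" by (fact mg_component_subset)+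
  have f'L: "f' ` ?L \<subseteq> ?K"
    using mg_endo_component[OF endo' mg_endoD(1)[OF endo v]] f'f v by simp
  have fK: "f ` ?K = ?L"
  proof
    show "f ` ?K \<subseteq> ?L" using mg_endo_component[OF endo v] .
    show "?L \<subseteq> f ` ?K"
    proof
      fix w assume w: "w \<in> ?L"
      then have "w = f (f' w)" using ff' L by auto
      then show "w \<in> f ` ?K" using f'L w by blast
    qed
  qed
  have f'L_eq: "f' ` ?L = ?K"
  proof -
    have "\<forall>w\<in>?K. f' (f w) = w" using f'f K by blast
    then show ?thesis unfolding fK[symmetric] image_image by simp
  qed
  have bij_vertices: "bij_betw f ?K ?L"
  proof (rule bij_betw_byWitness[where f' = f'])
    show "\<forall>w\<in>?K. f' (f w) = w" using f'f K by blast
    show "\<forall>w\<in>?L. f (f' w) = w" using ff' L by blast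
  qed (simp_all add: fK f'L_eq)
  have bij_edges: "bij_betw h (induced_edges E ep ?K) (induced_edges E ep ?L)"
  proof (rule bij_betw_byWitness[where f' = h'])
    show "\<forall>e\<in>induced_edges E ep ?K. h' (h e) = e"
      and "\<forall>e\<in>induced_edges E ep ?L. h (h' e) = e"
      using h'h hh' unfolding induced_edges_def by simp_all
    show "h ` induced_edges E ep ?K \<subseteq> induced_edges E ep ?L"
      using mg_endo_induced_edges[OF endo, of ?K] unfolding fK .
    show "h' ` induced_edges E ep ?L \<subseteq> induced_edges E ep ?K"
      using mg_endo_induced_edges[OF endo', of ?L] unfolding f'L_eq .
  qed
  have "\<forall>e\<in>induced_edges E ep ?K. ep (h e) = f ` ep e"
    using mg_endoD(3)[OF endo] unfolding induced_edges_def by simp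
  then show ?thesis
    unfolding mg_iso_def using bij_vertices bij_edges by blast
qed

lemma (in group) rcosets_eq_r_coset_of_mem:
  assumes "subgroup H G" "C \<in> rcosets H" "c \<in> C"
  shows "C = H #> c"
proof -
  obtain x where "x \<in> carrier G" "C = H #> x"
    using assms(2) unfolding RCOSETS_def by blast
  then show ?thesis using repr_independence assms(1,3) by blast
qed

lemma (in group) rcosets_subset_r_coset:
  assumes "subgroup H G" "H \<subseteq> L" "C \<in> rcosets H" "c \<in> C"
  shows "C \<subseteq> L #> c"
  using rcosets_eq_r_coset_of_mem[OF assms(1,3,4)] assms(2) unfolding r_coset_def by blast

lemma (in group) r_coset_in_rcosets:
  assumes "subgroup H G" "C \<in> rcosets H" "g \<in> carrier G"
  shows "C #> g \<in> rcosets H"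
proof -
  obtain x where x: "x \<in> carrier G" "C = H #> x"
    using assms(2) unfolding RCOSETS_def by blast
  then have "C #> g = H #> (x \<otimes> g)"
    using coset_mult_assoc subgroup.subset[OF assms(1)] assms(3) by simp
  then show ?thesis
    using rcosetsI subgroup.subset[OF assms(1)] x(1) assms(3) by simp
qed

lemma (in group) subset_set_mult_left:
  assumes "subgroup K G" "H \<subseteq> carrier G"
  shows "H \<subseteq> H <#> K"
proof
  fix h assume "h \<in> H"
  then have "h = h \<otimes> \<one>" "\<one> \<in> K"
    using assms subgroup.one_closed by auto
  then show "h \<in> H <#> K" using \<open>h \<in> H\<close> unfolding set_mult_def by blast
qed

lemma (in group) subset_set_mult_right:
  assumes "subgroup H G" "K \<subseteq> carrier G"
  shows "K \<subseteq> H <#> K"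
proof
  fix k assume "k \<in> K"
  then have "k = \<one> \<otimes> k" "\<one> \<in> H"
    using assms subgroup.one_closed by auto
  then show "k \<in> H <#> K" using \<open>k \<in> K\<close> unfolding set_mult_def by blast
qed

lemma (in comm_group) r_cosets_meet:
  assumes "subgroup H G" "subgroup K G" "x \<in> carrier G" "y \<in> (H <#> K) #> x"
  shows "(H #> x) \<inter> (K #> y) \<noteq> {}"
proof -
  obtain h k where hk: "h \<in> H" "k \<in> K" "y = h \<otimes> k \<otimes> x"
    using assms(4) unfolding r_coset_def set_mult_def by blast
  have carr: "h \<in> carrier G" "k \<in> carrier G"
    using hk subgroup.mem_carrier assms(1,2) by metis+
  have "y = k \<otimes> (h \<otimes> x)"
    using hk(3) carr assms(3) by (simp add: m_ac)
  then have "inv k \<otimes> y = h \<otimes> x"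
    using carr assms(3) by (simp add: m_assoc[symmetric])
  moreover have "inv k \<otimes> y \<in> K #> y"
    using rcosI subgroup.m_inv_closed[OF assms(2) hk(2)] subgroup.subset[OF assms(2)] hk(3) carr assms(3)
    by simp
  moreover have "h \<otimes> x \<in> H #> x"
    using rcosI hk(1) subgroup.subset[OF assms(1)] assms(3) by simp
  ultimately show ?thesis by auto
qed

locale Phi_level_pair = comm_group G for G :: "('a, 'b) monoid_scheme" (structure) +
  fixes I :: "'i set" and s :: "'i \<Rightarrow> 'a" and i j :: 'i
  assumes s_carrier: "s \<in> I \<rightarrow> carrier G"
    and i_mem: "i \<in> I" and j_mem: "j \<in> I" and i_neq_j: "i \<noteq> j"
begin

abbreviation cyc :: "'i \<Rightarrow> 'a set" where
  "cyc k \<equiv> generate G {s k}"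

definition pair_vertices :: "('i \<times> 'a set) set" where
  "pair_vertices = Phi_level G s i \<union> Phi_level G s j"

definition pair_edges :: "(('i \<times> 'a set) set \<times> 'a) set" where
  "pair_edges = induced_edges (Phi_E G I s) fst pair_vertices"

lemma subgroup_cyc: "k \<in> I \<Longrightarrow> subgroup (cyc k) G"
  using s_carrier by (intro generate_is_subgroup) auto

lemma mem_pair_vertices_iff:
  "v \<in> pair_vertices \<longleftrightarrow> (fst v = i \<or> fst v = j) \<and> snd v \<in> rcosets (cyc (fst v))"
  unfolding pair_vertices_def Phi_level_def by (cases v) auto

lemma pair_vertex_subgroup: "v \<in> pair_vertices \<Longrightarrow> subgroup (cyc (fst v)) G"
  using mem_pair_vertices_iff subgroup_cyc i_mem j_mem by auto

lemma pair_vertex_rcoset: "v \<in> pair_vertices \<Longrightarrow> snd v \<in> rcosets (cyc (fst v))"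
  using mem_pair_vertices_iff by blast

lemma pair_vertex_nonempty: "v \<in> pair_vertices \<Longrightarrow> snd v \<noteq> {}"
  using subgroup.rcosets_non_empty pair_vertex_subgroup pair_vertex_rcoset by blast

lemma pair_vertex_carrier: "v \<in> pair_vertices \<Longrightarrow> snd v \<subseteq> carrier G"
  using subgroup.rcosets_carrier pair_vertex_subgroup pair_vertex_rcoset is_group by blast

lemma mem_pair_edges_iff:
  "e \<in> pair_edges \<longleftrightarrow> (\<exists>x y g. e = ({x, y}, g) \<and> x \<in> pair_vertices \<and> y \<in> pair_vertices
                                  \<and> fst x \<noteq> fst y \<and> g \<in> snd x \<inter> snd y)"
proof -
  have "pair_vertices \<subseteq> Phi_V G I s"
    unfolding pair_vertices_def Phi_V_def using i_mem j_mem by auto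
  then show ?thesis
    unfolding pair_edges_def induced_edges_def Phi_E_def by fastforce
qed

lemma pair_adj_iff:
  "mg_adj pair_edges fst x y \<longleftrightarrow>
     x \<in> pair_vertices \<and> y \<in> pair_vertices \<and> fst x \<noteq> fst y \<and> snd x \<inter> snd y \<noteq> {}"
proof
  assume "mg_adj pair_edges fst x y"
  then obtain e where e: "e \<in> pair_edges" "fst e = {x, y}"
    unfolding mg_adj_def by blast
  then obtain x' y' g where "e = ({x', y'}, g)" "x' \<in> pair_vertices" "y' \<in> pair_vertices"
    "fst x' \<noteq> fst y'" "g \<in> snd x' \<inter> snd y'"
    unfolding mem_pair_edges_iff by blast
  with e(2) show "x \<in> pair_vertices \<and> y \<in> pair_vertices \<and> fst x \<noteq> fst y \<and> snd x \<inter> snd y \<noteq> {}"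
    by (auto simp: doubleton_eq_iff)
next
  assume "x \<in> pair_vertices \<and> y \<in> pair_vertices \<and> fst x \<noteq> fst y \<and> snd x \<inter> snd y \<noteq> {}"
  then obtain g where "({x, y}, g) \<in> pair_edges"
    unfolding mem_pair_edges_iff by blast
  then show "mg_adj pair_edges fst x y"
    unfolding mg_adj_def by force
qed

definition shift :: "'a \<Rightarrow> 'i \<times> 'a set \<Rightarrow> 'i \<times> 'a set" where
  "shift g v = (fst v, snd v #> g)"

definition shift_edge :: "'a \<Rightarrow> ('i \<times> 'a set) set \<times> 'a \<Rightarrow> ('i \<times> 'a set) set \<times> 'a" where
  "shift_edge g e = (shift g ` fst e, snd e \<otimes> g)"

lemma fst_shift [simp]: "fst (shift g v) = fst v"
  unfolding shift_def by simp

lemma shift_mem_pair_vertices: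
  assumes "g \<in> carrier G" "v \<in> pair_vertices"
  shows "shift g v \<in> pair_vertices"
proof -
  have "snd (shift g v) \<in> rcosets (cyc (fst v))"
    using r_coset_in_rcosets[OF pair_vertex_subgroup pair_vertex_rcoset] assms
    by (simp add: shift_def)
  then show ?thesis
    using assms(2) unfolding mem_pair_vertices_iff by simp
qed

lemma mult_mem_shift: "c \<in> snd v \<Longrightarrow> c \<otimes> g \<in> snd (shift g v)"
  unfolding shift_def r_coset_def by auto

lemma shift_inv_shift:
  "g \<in> carrier G \<Longrightarrow> v \<in> pair_vertices \<Longrightarrow> shift (inv g) (shift g v) = v"
  using pair_vertex_carrier by (simp add: shift_def coset_mult_assoc)

lemma shift_shift_inv:
  "g \<in> carrier G \<Longrightarrow> v \<in> pair_vertices \<Longrightarrow> shift g (shift (inv g) v) = v"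
  using shift_inv_shift[of "inv g"] by simp

lemma shift_edge_in_pair_edges:
  assumes "g \<in> carrier G" "e \<in> pair_edges"
  shows "shift_edge g e \<in> pair_edges"
proof -
  obtain x y a where e: "e = ({x, y}, a)" "x \<in> pair_vertices" "y \<in> pair_vertices"
    "fst x \<noteq> fst y" "a \<in> snd x \<inter> snd y"
    using assms(2) unfolding mem_pair_edges_iff by blast
  have "shift_edge g e = ({shift g x, shift g y}, a \<otimes> g)"
    unfolding shift_edge_def e(1) by simp
  moreover have "shift g x \<in> pair_vertices" "shift g y \<in> pair_vertices"
    using e(2,3) shift_mem_pair_vertices[OF assms(1)] by blast+
  moreover have "a \<otimes> g \<in> snd (shift g x) \<inter> snd (shift g y)"
    using e(5) mult_mem_shift by blast
  ultimately show ?thesis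
    unfolding mem_pair_edges_iff using e(4) by fastforce
qed

lemma mg_endo_shift: "g \<in> carrier G \<Longrightarrow> mg_endo pair_vertices pair_edges fst (shift g) (shift_edge g)"
  unfolding mg_endo_def using shift_mem_pair_vertices shift_edge_in_pair_edges
  by (auto simp: shift_edge_def)

lemma shift_edge_inv_shift_edge:
  assumes "g \<in> carrier G" "e \<in> pair_edges"
  shows "shift_edge (inv g) (shift_edge g e) = e"
proof -
  obtain x y a where e: "e = ({x, y}, a)" "x \<in> pair_vertices" "y \<in> pair_vertices"
    "a \<in> snd x"
    using assms(2) unfolding mem_pair_edges_iff by blast
  have "a \<in> carrier G" using pair_vertex_carrier e(2,4) by blast
  then show ?thesis
    unfolding shift_edge_def e(1) using shift_inv_shift assms(1) e(2,3) by (simp add: m_assoc)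
qed

lemma shift_edge_shift_edge_inv:
  "g \<in> carrier G \<Longrightarrow> e \<in> pair_edges \<Longrightarrow> shift_edge g (shift_edge (inv g) e) = e"
  using shift_edge_inv_shift_edge[of "inv g"] by simp

lemma pair_components_isomorphic:
  assumes "K \<in> mg_components pair_vertices pair_edges fst"
    and "L \<in> mg_components pair_vertices pair_edges fst"
  shows "mg_iso K (induced_edges pair_edges fst K) fst L (induced_edges pair_edges fst L) fst"
proof -
  let ?comp = "mg_component pair_vertices pair_edges fst"
  obtain v w where v: "v \<in> pair_vertices" "K = ?comp v" and w: "w \<in> pair_vertices" "L = ?comp w"
    using assms unfolding mg_components_def by blast
  obtain a b where a: "a \<in> snd v" and b: "b \<in> snd w"
    using pair_vertex_nonempty v(1) w(1) by blast
  have carr: "a \<in> carrier G" "b \<in> carrier G"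
    using a b pair_vertex_carrier v(1) w(1) by blast+
  define g where "g = inv a \<otimes> b"
  have g: "g \<in> carrier G" unfolding g_def using carr by simp
  have "a \<otimes> g = b" unfolding g_def using carr by (simp add: m_assoc[symmetric])
  then have b_shift: "b \<in> snd (shift g v)" using mult_mem_shift[OF a, of g] by simp
  have shift_v: "shift g v \<in> pair_vertices" using shift_mem_pair_vertices[OF g v(1)] .
  have "?comp (shift g v) = L"
  proof (cases "fst (shift g v) = fst w")
    case True
    then have "snd (shift g v) = snd w"
      using rcosets_eq_r_coset_of_mem[OF pair_vertex_subgroup pair_vertex_rcoset] shift_v w(1) b b_shift
      by metis
    then have "shift g v = w" using True by (simp add: prod_eq_iff)
    then show ?thesis using w(2) by simp
  next
    case False
    then have "mg_adj pair_edges fst w (shift g v)"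
      unfolding pair_adj_iff using shift_v w(1) b b_shift by auto
    then show ?thesis
      using mg_component_eq[OF mg_component_adj[OF w(1) shift_v]] w(2) by simp
  qed
  moreover have "mg_iso K (induced_edges pair_edges fst K) fst
                        (?comp (shift g v)) (induced_edges pair_edges fst (?comp (shift g v))) fst"
    unfolding v(2)
  proof (rule mg_iso_component_image[OF mg_endo_shift[OF g] mg_endo_shift[OF inv_closed[OF g]]])
    show "\<forall>u\<in>pair_vertices. shift (inv g) (shift g u) = u"
      and "\<forall>u\<in>pair_vertices. shift g (shift (inv g) u) = u"
      using shift_inv_shift shift_shift_inv g by blast+
    show "\<forall>e\<in>pair_edges. shift_edge (inv g) (shift_edge g e) = e"
      and "\<forall>e\<in>pair_edges. shift_edge g (shift_edge (inv g) e) = e"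
      using shift_edge_inv_shift_edge shift_edge_shift_edge_inv g by blast+
  qed (fact v(1))
  ultimately show ?thesis by simp
qed

lemma subgroup_cyc_set_mult: "subgroup (cyc i <#> cyc j) G"
  using mult_subgroups subgroup_cyc i_mem j_mem by blast

lemma cyc_subset_set_mult:
  assumes "k \<in> {i, j}"
  shows "cyc k \<subseteq> cyc i <#> cyc j"
proof -
  have "cyc i \<subseteq> cyc i <#> cyc j"
    using subset_set_mult_left[OF subgroup_cyc[OF j_mem] subgroup.subset[OF subgroup_cyc[OF i_mem]]] .
  moreover have "cyc j \<subseteq> cyc i <#> cyc j"
    using subset_set_mult_right[OF subgroup_cyc[OF i_mem] subgroup.subset[OF subgroup_cyc[OF j_mem]]] .
  ultimately show ?thesis using assms by blast
qed

lemma pair_vertex_subset_r_coset: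
  assumes "v \<in> pair_vertices" "c \<in> snd v"
  shows "snd v \<subseteq> (cyc i <#> cyc j) #> c"
proof -
  have "fst v \<in> {i, j}" using assms(1) unfolding mem_pair_vertices_iff by blast
  from rcosets_subset_r_coset[OF pair_vertex_subgroup[OF assms(1)] cyc_subset_set_mult[OF this]
      pair_vertex_rcoset[OF assms(1)] assms(2)]
  show ?thesis .
qed

lemma pair_component_subset_r_coset:
  assumes "w \<in> mg_component pair_vertices pair_edges fst v" "v \<in> pair_vertices" "c \<in> snd v"
  shows "snd w \<subseteq> (cyc i <#> cyc j) #> c"
  using assms(1)
proof (induction rule: mg_component_induct)
  case base
  show ?case using pair_vertex_subset_r_coset[OF assms(2,3)] .
next
  case (step x y)
  obtain d where d: "d \<in> snd x" "d \<in> snd y"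
    using step.hyps(3) unfolding pair_adj_iff by blast
  have c: "c \<in> carrier G" using pair_vertex_carrier[OF assms(2)] assms(3) by blast
  have "(cyc i <#> cyc j) #> c = (cyc i <#> cyc j) #> d"
    using repr_independence[OF _ c subgroup_cyc_set_mult] step.IH d(1) by blast
  then show ?case using pair_vertex_subset_r_coset[OF step.hyps(2) d(2)] by simp
qed

lemma pair_component_complete_bipartite:
  assumes "K \<in> mg_components pair_vertices pair_edges fst"
    and "v \<in> K" "fst v = i" and "w \<in> K" "fst w = j"
  shows "mg_adj pair_edges fst v w"
proof -
  let ?comp = "mg_component pair_vertices pair_edges fst"
  obtain u where K: "K = ?comp u"
    using assms(1) unfolding mg_components_def by blast
  have w: "w \<in> ?comp v"
    using mg_component_eq[of v pair_vertices pair_edges fst u] assms(2,4) unfolding K by simp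
  have vw: "v \<in> pair_vertices" "w \<in> pair_vertices"
    using mg_component_subset[of pair_vertices pair_edges fst u] assms(2,4) unfolding K by blast+
  obtain c d where c: "c \<in> snd v" and d: "d \<in> snd w"
    using pair_vertex_nonempty vw by blast
  have "d \<in> (cyc i <#> cyc j) #> c"
    using pair_component_subset_r_coset[OF w vw(1) c] d by blast
  moreover have "snd v = cyc i #> c" "snd w = cyc j #> d"
    using rcosets_eq_r_coset_of_mem[OF pair_vertex_subgroup[OF vw(1)] pair_vertex_rcoset[OF vw(1)] c]
      rcosets_eq_r_coset_of_mem[OF pair_vertex_subgroup[OF vw(2)] pair_vertex_rcoset[OF vw(2)] d]
      assms(3,5) by simp_all
  moreover have "c \<in> carrier G" using pair_vertex_carrier[OF vw(1)] c by blast
  ultimately have "snd v \<inter> snd w \<noteq> {}"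
    using r_cosets_meet[OF subgroup_cyc[OF i_mem] subgroup_cyc[OF j_mem]] by simp
  then show ?thesis
    unfolding pair_adj_iff using vw assms(3,5) i_neq_j by simp
qed

end

theorem proposition5:
  fixes G :: "('a, 'b) monoid_scheme" and I :: "'i set" and s :: "'i \<Rightarrow> 'a"
  assumes "comm_group G" and "finite I" and "s \<in> I \<rightarrow> carrier G"
    and "i \<in> I" and "j \<in> I" and "i \<noteq> j"
  shows "let W = Phi_level G s i \<union> Phi_level G s j;
             E = induced_edges (Phi_E G I s) fst W
         in (\<forall>K\<in>mg_components W E fst. \<forall>L\<in>mg_components W E fst.
               mg_iso K (induced_edges E fst K) fst L (induced_edges E fst L) fst)
          \<and> (\<forall>K\<in>mg_components W E fst. \<forall>v\<in>K \<inter> Phi_level G s i. \<forall>w\<in>K \<inter> Phi_level G s j.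
               mg_adj E fst v w)"
proof -
  interpret Phi_level_pair G I s i j
    using assms(1,3-6) unfolding Phi_level_pair_def Phi_level_pair_axioms_def by blast
  have level: "fst v = k" if "v \<in> Phi_level G s k" for v k
    using that unfolding Phi_level_def by auto
  show ?thesis
    unfolding Let_def pair_vertices_def[symmetric] pair_edges_def[symmetric]
    using pair_components_isomorphic pair_component_complete_bipartite level by blast
qed

end
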